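(* Let $d = 10$. (i) If $n = 4(12m+5) + 4(6k+3)\sqrt{10}$ with $m, k \in \mathbb{Z}$, $m \equiv 0 \pmod 5$ and $k \equiv 2 \pmod 5$, then there exist infinitely many $D(n)$-quadruples in $\mathbb{Z}[\sqrt{10}]$. (ii) If $n = 4(12m+11) + 4(6k+3)\sqrt{10}$ with $m, k \in \mathbb{Z}$, $m \equiv 2 \pmod 5$ and $k \equiv 2 \pmod 5$, then there exist infinitely many $D(n)$-quadruples in $\mathbb{Z}[\sqrt{10}]$.
   Context: For $n \in \mathbb{Z}[\sqrt{d}]$, a set $\{a_1,a_2,a_3,a_4\}$ of four distinct non-zero elements of $\mathbb{Z}[\sqrt{d}]$ is called a $D(n)$-quadruple in $\mathbb{Z}[\sqrt{d}]$ if $a_ia_j + n$ is a square of an element of $\mathbb{Z}[\sqrt{d}]$ for all $1 \le i < j \le 4$. *)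

theory Defs
  imports Main
begin

text \<open>Elements of Z[sqrt d] are represented as pairs (a, b) of integers, standing for a + b sqrt d.
  For non-square d (such as d = 10) this representation is faithful (unique).\<close>

type_synonym zsqrt = "int \<times> int"

definition zs_add :: "zsqrt \<Rightarrow> zsqrt \<Rightarrow> zsqrt" where
  "zs_add x y = (fst x + fst y, snd x + snd y)"

definition zs_mult :: "int \<Rightarrow> zsqrt \<Rightarrow> zsqrt \<Rightarrow> zsqrt" where
  "zs_mult d x y = (fst x * fst y + d * snd x * snd y, fst x * snd y + snd x * fst y)"

definition zs_is_square :: "int \<Rightarrow> zsqrt \<Rightarrow> bool" where
  "zs_is_square d x \<longleftrightarrow> (\<exists>y. zs_mult d y y = x)"

definition is_Dn_quadruple :: "int \<Rightarrow> zsqrt \<Rightarrow> zsqrt set \<Rightarrow> bool" where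
  "is_Dn_quadruple d n S \<longleftrightarrow>
     card S = 4 \<and> (0, 0) \<notin> S \<and>
     (\<forall>x\<in>S. \<forall>y\<in>S. x \<noteq> y \<longrightarrow> zs_is_square d (zs_add (zs_mult d x y) n))"

end

theory Submission
  imports Defs
begin

text \<open>Let \<open>u\<close> be a unit of norm 1 in \<open>\<int>[\<surd>D]\<close> with \<open>u \<equiv> 1 (mod 2)\<close>, let \<open>u'\<close> be its
  conjugate, and put \<open>c = u'(\<nu> - 1)\<close>, \<open>d = u(9\<nu> - 1)\<close>. Then \<open>cd = (\<nu> - 1)(9\<nu> - 1)\<close>, so
  \<open>cd + 4\<nu> = (3\<nu> - 1)\<^sup>2\<close> and \<open>cd + 16\<nu> = s\<^sup>2\<close> with \<open>s = 3\<nu> + 1\<close>. The regular extension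
  \<open>a, b = (c + d \<plusminus> 2s)/4\<close> completes \<open>{c, d}\<close> to a \<open>D(4\<nu>)\<close>-quadruple: with \<open>r = (c - d)/4\<close>
  one has \<open>ab + 4\<nu> = r\<^sup>2\<close>, \<open>ac + 4\<nu> = (a + r)\<^sup>2\<close>, \<open>bc + 4\<nu> = (b + r)\<^sup>2\<close>,
  \<open>ad + 4\<nu> = (a - r)\<^sup>2\<close>, \<open>bd + 4\<nu> = (b - r)\<^sup>2\<close>.
  For \<open>D = 10\<close> the hypotheses on \<open>m, k\<close> say that \<open>\<nu> \<equiv> 5 (mod 15)\<close> and that the
  \<open>\<surd>10\<close>-coordinate of \<open>\<nu>\<close> is odd. For the infinitely many units \<open>u \<equiv> 1 + 18\<surd>10 (mod 30)\<close>
  the four elements are then distinct and non-zero modulo 15, and \<open>d = u(9\<nu> - 1)\<close>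
  determines \<open>u\<close> because \<open>9\<nu> - 1\<close> has non-zero norm.\<close>

definition zs_cnj :: "zsqrt \<Rightarrow> zsqrt" where
  "zs_cnj x = (fst x, - snd x)"

definition zs_norm :: "int \<Rightarrow> zsqrt \<Rightarrow> int" where
  "zs_norm D x = fst x ^ 2 - D * snd x ^ 2"

definition zs_mod :: "zsqrt \<Rightarrow> int \<Rightarrow> zsqrt" where
  "zs_mod x m = (fst x mod m, snd x mod m)"

lemma zs_mult_commute: "zs_mult D x y = zs_mult D y x"
  unfolding zs_mult_def by (simp add: algebra_simps)

lemma zs_norm_mult: "zs_norm D (zs_mult D x y) = zs_norm D x * zs_norm D y"
  unfolding zs_norm_def zs_mult_def by simp algebra

lemma zs_mod_mult: "zs_mod (zs_mult D x y) m = zs_mod (zs_mult D (zs_mod x m) (zs_mod y m)) m"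
  unfolding zs_mod_def zs_mult_def by (auto intro!: mod_add_cong mod_mult_cong)

lemma zs_mult_right_cancel:
  assumes "zs_norm D x \<noteq> 0" and "zs_mult D y x = zs_mult D z x"
  shows "y = z"
proof -
  obtain x1 x2 y1 y2 z1 z2 where "x = (x1, x2)" "y = (y1, y2)" "z = (z1, z2)"
    by (cases x, cases y, cases z) auto
  with assms have "x1 ^ 2 - D * x2 ^ 2 \<noteq> 0"
    and "y1 * x1 + D * y2 * x2 = z1 * x1 + D * z2 * x2" and "y1 * x2 + y2 * x1 = z1 * x2 + z2 * x1"
    unfolding zs_norm_def zs_mult_def by simp_all
  then have "y1 = z1" and "y2 = z2" by algebra+
  with \<open>y = (y1, y2)\<close> \<open>z = (z1, z2)\<close> show ?thesis by simp
qed

lemma zs_norm_10_nonzero: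
  fixes x y :: int
  assumes "odd y"
  shows "zs_norm 10 (x, y) \<noteq> 0"
proof
  assume "zs_norm 10 (x, y) = 0"
  then have eq: "x ^ 2 = 10 * y ^ 2" by (simp add: zs_norm_def)
  then have "even (x ^ 2)" by simp
  then have "even x" by simp
  then obtain k where "x = 2 * k" by blast
  with eq have "5 * y ^ 2 = 2 * k ^ 2" by (simp add: power_mult_distrib)
  then have "even (5 * y ^ 2)" by simp
  then have "even (y ^ 2)" by simp
  with assms show False by simp
qed

definition quad_c :: "int \<Rightarrow> zsqrt \<Rightarrow> zsqrt \<Rightarrow> zsqrt" where
  "quad_c D u v = zs_mult D (zs_cnj u) (fst v - 1, snd v)"

definition quad_d :: "int \<Rightarrow> zsqrt \<Rightarrow> zsqrt \<Rightarrow> zsqrt" where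
  "quad_d D u v = zs_mult D u (9 * fst v - 1, 9 * snd v)"

text \<open>\<open>quad_a\<close>, \<open>quad_b\<close> and \<open>quad_root\<close> are \<open>(c + d \<plusminus> 2(3\<nu> + 1))/4\<close> and \<open>(c - d)/4\<close>;
  the divisions are exact when \<open>u \<equiv> 1 (mod 2)\<close>.\<close>

definition quad_a :: "int \<Rightarrow> zsqrt \<Rightarrow> zsqrt \<Rightarrow> zsqrt" where
  "quad_a D u v =
     ((fst (quad_c D u v) + fst (quad_d D u v) + 2 * (3 * fst v + 1)) div 4,
      (snd (quad_c D u v) + snd (quad_d D u v) + 2 * (3 * snd v)) div 4)"

definition quad_b :: "int \<Rightarrow> zsqrt \<Rightarrow> zsqrt \<Rightarrow> zsqrt" where
  "quad_b D u v =
     ((fst (quad_c D u v) + fst (quad_d D u v) - 2 * (3 * fst v + 1)) div 4,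
      (snd (quad_c D u v) + snd (quad_d D u v) - 2 * (3 * snd v)) div 4)"

definition quad_root :: "int \<Rightarrow> zsqrt \<Rightarrow> zsqrt \<Rightarrow> zsqrt" where
  "quad_root D u v =
     ((fst (quad_c D u v) - fst (quad_d D u v)) div 4, (snd (quad_c D u v) - snd (quad_d D u v)) div 4)"

definition quad :: "int \<Rightarrow> zsqrt \<Rightarrow> zsqrt \<Rightarrow> zsqrt set" where
  "quad D u v = {quad_a D u v, quad_b D u v, quad_c D u v, quad_d D u v}"

lemma quad_c_d_closed_forms:
  assumes "u = (2 * \<alpha> + 1, 2 * \<beta>)" and "v = (n1, n2)"
  shows "quad_c D u v = ((2 * \<alpha> + 1) * (n1 - 1) - 2 * D * \<beta> * n2, (2 * \<alpha> + 1) * n2 - 2 * \<beta> * (n1 - 1))"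
    and "quad_d D u v = ((2 * \<alpha> + 1) * (9 * n1 - 1) + 18 * D * \<beta> * n2, 9 * (2 * \<alpha> + 1) * n2 + 2 * \<beta> * (9 * n1 - 1))"
  using assms by (simp_all add: quad_c_def quad_d_def zs_cnj_def zs_mult_def algebra_simps)

lemma quad_a_b_root_closed_forms:
  assumes "u = (2 * \<alpha> + 1, 2 * \<beta>)" and "v = (n1, n2)"
  shows "quad_a D u v = (5 * \<alpha> * n1 - \<alpha> + 4 * n1 + 4 * D * \<beta> * n2, 5 * \<alpha> * n2 + 4 * n2 + 4 * \<beta> * n1)"
    and "quad_b D u v = (5 * \<alpha> * n1 - \<alpha> + n1 - 1 + 4 * D * \<beta> * n2, 5 * \<alpha> * n2 + n2 + 4 * \<beta> * n1)"
    and "quad_root D u v = (- 2 * (2 * \<alpha> + 1) * n1 - 5 * D * \<beta> * n2, - 2 * (2 * \<alpha> + 1) * n2 - 5 * \<beta> * n1 + \<beta>)"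
  unfolding quad_a_def quad_b_def quad_root_def quad_c_d_closed_forms[OF assms] using assms
  by (auto intro!: trans[OF arg_cong[where f = "\<lambda>x. x div 4"] nonzero_mult_div_cancel_left[of "4::int"]])
    (simp_all add: algebra_simps)

lemma quad_products_plus_4v:
  fixes D :: int and u v :: zsqrt
  assumes "zs_norm D u = 1" and u: "u = (2 * \<alpha> + 1, 2 * \<beta>)" and v: "v = (n1, n2)"
  defines "a \<equiv> quad_a D u v" and "b \<equiv> quad_b D u v" and "c \<equiv> quad_c D u v"
    and "d \<equiv> quad_d D u v" and "r \<equiv> quad_root D u v" and "n \<equiv> (4 * fst v, 4 * snd v)"
  shows "zs_add (zs_mult D a b) n = zs_mult D r r"
    and "zs_add (zs_mult D a c) n = zs_mult D (zs_add a r) (zs_add a r)"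
    and "zs_add (zs_mult D b c) n = zs_mult D (zs_add b r) (zs_add b r)"
    and "zs_add (zs_mult D a d) n = zs_mult D (fst a - fst r, snd a - snd r) (fst a - fst r, snd a - snd r)"
    and "zs_add (zs_mult D b d) n = zs_mult D (fst b - fst r, snd b - snd r) (fst b - fst r, snd b - snd r)"
    and "zs_add (zs_mult D c d) n = zs_mult D (3 * fst v - 1, 3 * snd v) (3 * fst v - 1, 3 * snd v)"
  using assms(1) unfolding a_def b_def c_def d_def r_def n_def
    quad_c_d_closed_forms[OF u v] quad_a_b_root_closed_forms[OF u v]
  unfolding u v zs_norm_def zs_add_def zs_mult_def prod_eq_iff by auto algebra+

lemma quad_is_Dn_quadruple:
  assumes "zs_norm D u = 1" and "odd (fst u)" and "even (snd u)"
    and "card (quad D u v) = 4" and "(0, 0) \<notin> quad D u v"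
  shows "is_Dn_quadruple D (4 * fst v, 4 * snd v) (quad D u v)"
proof -
  obtain \<alpha> \<beta> where u: "u = (2 * \<alpha> + 1, 2 * \<beta>)"
    using assms(2,3) by (metis oddE evenE prod.collapse)
  obtain n1 n2 where v: "v = (n1, n2)" by fastforce
  let ?sq = "\<lambda>x y. zs_is_square D (zs_add (zs_mult D x y) (4 * fst v, 4 * snd v))"
  have sym: "?sq y x" if "?sq x y" for x y
    using that by (simp add: zs_mult_commute)
  have "?sq (quad_a D u v) (quad_b D u v)" "?sq (quad_a D u v) (quad_c D u v)"
    "?sq (quad_b D u v) (quad_c D u v)" "?sq (quad_a D u v) (quad_d D u v)"
    "?sq (quad_b D u v) (quad_d D u v)" "?sq (quad_c D u v) (quad_d D u v)"
    unfolding zs_is_square_def using quad_products_plus_4v[OF assms(1) u v] by metis+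
  then have "\<forall>x\<in>quad D u v. \<forall>y\<in>quad D u v. x \<noteq> y \<longrightarrow> ?sq x y"
    unfolding quad_def using sym by blast
  with assms(4,5) show ?thesis
    unfolding is_Dn_quadruple_def by blast
qed

lemma quad_10_card_nonzero:
  assumes "zs_mod u 30 = (1, 18)" and v: "v = (15 * P + 5, 15 * Q)"
  shows "card (quad 10 u v) = 4" and "(0, 0) \<notin> quad 10 u v"
proof -
  define A B where "A = fst u div 30" and "B = snd u div 30"
  have u: "u = (2 * (15 * A) + 1, 2 * (15 * B + 9))"
    using assms(1) unfolding A_def B_def zs_mod_def prod_eq_iff by simp presburger
  have mod15: "x mod 15 = r" if "15 dvd (x - r)" and "0 \<le> r" and "r < 15" for x r :: int
    using that by (metis mod_eq_dvd_iff mod_pos_pos_trivial)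
  note closed = quad_c_d_closed_forms[OF u v] quad_a_b_root_closed_forms[OF u v]
  have res: "zs_mod (quad_a 10 u v) 15 = (5, 0)" "zs_mod (quad_b 10 u v) 15 = (4, 0)"
    "zs_mod (quad_c 10 u v) 15 = (4, 3)" "zs_mod (quad_d 10 u v) 15 = (14, 12)"
    unfolding closed zs_mod_def by (auto intro!: mod15) algebra+
  then have "quad_a 10 u v \<noteq> quad_b 10 u v" "quad_a 10 u v \<noteq> quad_c 10 u v"
    "quad_a 10 u v \<noteq> quad_d 10 u v" "quad_b 10 u v \<noteq> quad_c 10 u v"
    "quad_b 10 u v \<noteq> quad_d 10 u v" "quad_c 10 u v \<noteq> quad_d 10 u v"
    by (metis prod.inject zero_neq_numeral numeral_eq_iff semiring_norm)+
  then show "card (quad 10 u v) = 4"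
    unfolding quad_def by simp
  show "(0, 0) \<notin> quad 10 u v"
    using res unfolding quad_def by (auto simp: zs_mod_def dest!: sym[of "(0, 0)"])
qed

lemma infinite_range_if_inj_member:
  fixes F :: "nat \<Rightarrow> 'a set"
  assumes "inj g" and "\<And>i. g i \<in> F i" and "\<And>i. finite (F i)"
  shows "infinite (range F)"
proof
  assume "finite (range F)"
  with assms(3) have "finite (\<Union> (range F))" by blast
  moreover have "range g \<subseteq> \<Union> (range F)" using assms(2) by blast
  ultimately have "finite (range g)" by (rule finite_subset[rotated])
  with assms(1) show False using finite_imageD infinite_UNIV_nat by blast
qed

text \<open>\<open>721 + 228\<surd>10 = (19 + 6\<surd>10)\<^sup>2\<close>, and the multiplier is \<open>(19 + 6\<surd>10)\<^sup>1\<^sup>0 \<equiv> 1 (mod 30)\<close>.\<close>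

definition unit_seq :: "nat \<Rightarrow> zsqrt" where
  "unit_seq i = (zs_mult 10 (3117419602578001, 985814636660340) ^^ i) (721, 228)"

lemma unit_seq_props:
  "zs_norm 10 (unit_seq i) = 1 \<and> zs_mod (unit_seq i) 30 = (1, 18)
     \<and> 0 < fst (unit_seq i) \<and> 0 < snd (unit_seq i)"
proof (induction i)
  case 0
  show ?case by (simp add: unit_seq_def zs_norm_def zs_mod_def)
next
  case (Suc i)
  let ?w = "(3117419602578001, 985814636660340) :: zsqrt"
  have step: "unit_seq (Suc i) = zs_mult 10 ?w (unit_seq i)"
    by (simp add: unit_seq_def)
  have "zs_norm 10 (unit_seq (Suc i)) = 1"
    unfolding step zs_norm_mult using Suc.IH by (simp add: zs_norm_def)
  moreover have "zs_mod (unit_seq (Suc i)) 30 = (1, 18)"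
    unfolding step using Suc.IH by (subst zs_mod_mult) (simp add: zs_mod_def zs_mult_def)
  moreover have "0 < fst (unit_seq (Suc i)) \<and> 0 < snd (unit_seq (Suc i))"
    unfolding step using Suc.IH by (simp add: zs_mult_def)
  ultimately show ?case by blast
qed

lemma strict_mono_unit_seq: "strict_mono (\<lambda>i. fst (unit_seq i))"
  unfolding strict_mono_Suc_iff
proof
  fix i
  show "fst (unit_seq i) < fst (unit_seq (Suc i))"
    using unit_seq_props[of i] by (simp add: unit_seq_def zs_mult_def)
qed

lemma infinite_Dn_quadruples_10:
  assumes "odd Q"
  shows "infinite {S. is_Dn_quadruple 10 (4 * (15 * P + 5), 4 * (15 * Q)) S}"
proof -
  define v where "v = (15 * P + 5, 15 * Q)"
  have quadruple: "is_Dn_quadruple 10 (4 * (15 * P + 5), 4 * (15 * Q)) (quad 10 (unit_seq i) v)" for i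
  proof -
    have unit: "zs_norm 10 (unit_seq i) = 1" and residue: "zs_mod (unit_seq i) 30 = (1, 18)"
      using unit_seq_props[of i] by blast+
    then have "fst (unit_seq i) mod 30 = 1" and "snd (unit_seq i) mod 30 = 18"
      by (simp_all add: zs_mod_def)
    then have "odd (fst (unit_seq i))" and "even (snd (unit_seq i))"
      by presburger+
    from quad_is_Dn_quadruple[OF unit this quad_10_card_nonzero[OF residue v_def]]
    show ?thesis by (simp add: v_def)
  qed
  have "inj (\<lambda>i. quad_d 10 (unit_seq i) v)"
  proof
    fix i j
    assume "quad_d 10 (unit_seq i) v = quad_d 10 (unit_seq j) v"
    moreover have "zs_norm 10 (9 * fst v - 1, 9 * snd v) \<noteq> 0"
      using assms by (simp add: v_def zs_norm_10_nonzero)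
    ultimately have "unit_seq i = unit_seq j"
      unfolding quad_d_def by (rule zs_mult_right_cancel[rotated])
    then show "i = j"
      using strict_mono_unit_seq strict_mono_eq by metis
  qed
  then have "infinite (range (\<lambda>i. quad 10 (unit_seq i) v))"
    by (rule infinite_range_if_inj_member) (simp_all add: quad_def)
  moreover have "range (\<lambda>i. quad 10 (unit_seq i) v)
      \<subseteq> {S. is_Dn_quadruple 10 (4 * (15 * P + 5), 4 * (15 * Q)) S}"
    using quadruple by blast
  ultimately show ?thesis by (rule infinite_super[rotated])
qed

theorem mainTheorem4:
  fixes m k :: int
  shows "(m mod 5 = 0 \<and> k mod 5 = 2 \<longrightarrow>
           infinite {S. is_Dn_quadruple 10 (4 * (12 * m + 5), 4 * (6 * k + 3)) S})
       \<and> (m mod 5 = 2 \<and> k mod 5 = 2 \<longrightarrow>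
           infinite {S. is_Dn_quadruple 10 (4 * (12 * m + 11), 4 * (6 * k + 3)) S})"
proof (intro conjI impI)
  assume "m mod 5 = 0 \<and> k mod 5 = 2"
  then have m: "12 * m + 5 = 15 * (4 * (m div 5)) + 5" and k: "6 * k + 3 = 15 * (2 * (k div 5) + 1)"
    using mult_div_mod_eq[of 5 m] mult_div_mod_eq[of 5 k] by simp_all
  show "infinite {S. is_Dn_quadruple 10 (4 * (12 * m + 5), 4 * (6 * k + 3)) S}"
    unfolding m k by (rule infinite_Dn_quadruples_10) simp
next
  assume "m mod 5 = 2 \<and> k mod 5 = 2"
  then have m: "12 * m + 11 = 15 * (4 * (m div 5) + 2) + 5" and k: "6 * k + 3 = 15 * (2 * (k div 5) + 1)"
    using mult_div_mod_eq[of 5 m] mult_div_mod_eq[of 5 k] by simp_all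
  show "infinite {S. is_Dn_quadruple 10 (4 * (12 * m + 11), 4 * (6 * k + 3)) S}"
    unfolding m k by (rule infinite_Dn_quadruples_10) simp
qed

end
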